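(* Consider problem (P) and assume it has an optimal solution $\mathbf{x}^*$ with an associated Lagrange multiplier $\mu^*>0$ for the resource constraint, and that Case 1 or Case 2 holds. Let $\mu^k\ge 0$ be arbitrary and put $\mathbf{x}^k:=\mathbf{x}(\mu^k)$. (i) If Case 1 holds and $\sum_{j\in J} g_j(x_j^k)<b$, then $x_j^*=l_j$ for all $j\in L(\mu^k)$. (ii) If Case 1 holds and $\sum_{j\in J} g_j(x_j^k)>b$, then $x_j^*=u_j$ for all $j\in U(\mu^k)$. (iii) If Case 2 holds and $\sum_{j\in J} g_j(x_j^k)<b$, then $x_j^*=u_j$ for all $j\in U(\mu^k)$. (iv) If Case 2 holds and $\sum_{j\in J} g_j(x_j^k)>b$, then $x_j^*=l_j$ for all $j\in L(\mu^k)$.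
   Context: Let $J=\{1,\dots,n\}$. For $j\in J$ let $\phi_j,g_j:\mathbb{R}\to\mathbb{R}$ be convex and continuously differentiable, with $\phi_j$ strictly convex, and let $-\infty<l_j<u_j<\infty$, $b\in\mathbb{R}$. Problem (P) is: minimize $\sum_{j\in J}\phi_j(x_j)$ subject to $\sum_{j\in J} g_j(x_j)\le b$ and $l_j\le x_j\le u_j$ for $j\in J$. A pair $(\mathbf{x}^*,\mu^* )$ is an optimal solution with Lagrange multiplier if $\mu^*\ge0$, $\sum_j g_j(x_j^* )\le b$, $\mu^*(\sum_j g_j(x_j^* )-b)=0$, $x_j^*\in[l_j,u_j]$, and for each $j$: $x_j^*=l_j$ if $\phi_j'(x_j^* )>-\mu^*g_j'(x_j^* )$, $x_j^*=u_j$ if $\phi_j'(x_j^* )<-\mu^*g_j'(x_j^* )$, and otherwise $\phi'_j(x_j^* )=-\mu^* g'_j(x_j^* )$ (i.e. $x_j^*$ minimizes $\phi_j+\mu^*g_j$ over $[l_j,u_j]$). For $\mu\ge 0$, $x_j(\mu)$ denotes the unique minimizer of $\phi_j(x_j)+\mu g_j(x_j)$ over $[l_j,u_j]$, and $\mathbf{x}(\mu)=(x_j(\mu))_{j\in J}$. Define $L(\mu):=\{j\in J: x_j(\mu)=l_j\}$ and $U(\mu):=\{j\in J: x_j(\mu)=u_j\}$. Assume $g_j'\neq0$ on $[l_j,u_j]$ and let $\mu_j(x):=-\phi_j'(x)/g_j'(x)$. Case 1: for all $j$, $g_j$ is decreasing and $\mu_j$ is strictly increasing on $[l_j,u_j]$.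 Case 2: for all $j$, $g_j$ is increasing and $\mu_j$ is strictly decreasing on $[l_j,u_j]$. *)

theory Defs
  imports "HOL-Analysis.Analysis"
begin

definition strict_convex_on :: "real set \<Rightarrow> (real \<Rightarrow> real) \<Rightarrow> bool" where
  "strict_convex_on S f \<longleftrightarrow> convex S \<and>
    (\<forall>x\<in>S. \<forall>y\<in>S. \<forall>t. x \<noteq> y \<and> 0 < t \<and> t < 1 \<longrightarrow>
       f ((1 - t) * x + t * y) < (1 - t) * f x + t * f y)"

definition xmu :: "(nat \<Rightarrow> real \<Rightarrow> real) \<Rightarrow> (nat \<Rightarrow> real \<Rightarrow> real) \<Rightarrow>
    (nat \<Rightarrow> real) \<Rightarrow> (nat \<Rightarrow> real) \<Rightarrow> real \<Rightarrow> nat \<Rightarrow> real" where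
  "xmu \<phi> g l u \<mu> j = (THE x. x \<in> {l j..u j} \<and>
      (\<forall>y\<in>{l j..u j}. \<phi> j x + \<mu> * g j x \<le> \<phi> j y + \<mu> * g j y))"

definition Lset :: "nat \<Rightarrow> (nat \<Rightarrow> real \<Rightarrow> real) \<Rightarrow> (nat \<Rightarrow> real \<Rightarrow> real) \<Rightarrow>
    (nat \<Rightarrow> real) \<Rightarrow> (nat \<Rightarrow> real) \<Rightarrow> real \<Rightarrow> nat set" where
  "Lset n \<phi> g l u \<mu> = {j \<in> {1..n}. xmu \<phi> g l u \<mu> j = l j}"

definition Uset :: "nat \<Rightarrow> (nat \<Rightarrow> real \<Rightarrow> real) \<Rightarrow> (nat \<Rightarrow> real \<Rightarrow> real) \<Rightarrow>
    (nat \<Rightarrow> real) \<Rightarrow> (nat \<Rightarrow> real) \<Rightarrow> real \<Rightarrow> nat set" where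
  "Uset n \<phi> g l u \<mu> = {j \<in> {1..n}. xmu \<phi> g l u \<mu> j = u j}"

text \<open>(x*, mu*) is an optimal solution of (P) with Lagrange multiplier mu*;
  d\<phi>, dg are the derivatives of \<phi>, g.\<close>
definition opt_lagrange :: "nat \<Rightarrow> (nat \<Rightarrow> real \<Rightarrow> real) \<Rightarrow> (nat \<Rightarrow> real \<Rightarrow> real) \<Rightarrow>
    (nat \<Rightarrow> real \<Rightarrow> real) \<Rightarrow>
    (nat \<Rightarrow> real) \<Rightarrow> (nat \<Rightarrow> real) \<Rightarrow> real \<Rightarrow> (nat \<Rightarrow> real) \<Rightarrow> real \<Rightarrow> bool" where
  "opt_lagrange n d\<phi> g dg l u b xs \<mu>s \<longleftrightarrow>
     \<mu>s \<ge> 0 \<and> (\<Sum>j\<in>{1..n}. g j (xs j)) \<le> b \<and>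
     \<mu>s * ((\<Sum>j\<in>{1..n}. g j (xs j)) - b) = 0 \<and>
     (\<forall>j\<in>{1..n}. xs j \<in> {l j..u j} \<and>
        (d\<phi> j (xs j) > - \<mu>s * dg j (xs j) \<longrightarrow> xs j = l j) \<and>
        (d\<phi> j (xs j) < - \<mu>s * dg j (xs j) \<longrightarrow> xs j = u j) \<and>
        (\<not> d\<phi> j (xs j) > - \<mu>s * dg j (xs j) \<and> \<not> d\<phi> j (xs j) < - \<mu>s * dg j (xs j)
            \<longrightarrow> d\<phi> j (xs j) = - \<mu>s * dg j (xs j)))"

definition case1 :: "nat \<Rightarrow> (nat \<Rightarrow> real \<Rightarrow> real) \<Rightarrow> (nat \<Rightarrow> real \<Rightarrow> real) \<Rightarrow>
    (nat \<Rightarrow> real \<Rightarrow> real) \<Rightarrow> (nat \<Rightarrow> real) \<Rightarrow> (nat \<Rightarrow> real) \<Rightarrow> bool" where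
  "case1 n d\<phi> g dg l u \<longleftrightarrow> (\<forall>j\<in>{1..n}.
     antimono_on {l j..u j} (g j) \<and>
     strict_mono_on {l j..u j} (\<lambda>x. - d\<phi> j x / dg j x))"

definition case2 :: "nat \<Rightarrow> (nat \<Rightarrow> real \<Rightarrow> real) \<Rightarrow> (nat \<Rightarrow> real \<Rightarrow> real) \<Rightarrow>
    (nat \<Rightarrow> real \<Rightarrow> real) \<Rightarrow> (nat \<Rightarrow> real) \<Rightarrow> (nat \<Rightarrow> real) \<Rightarrow> bool" where
  "case2 n d\<phi> g dg l u \<longleftrightarrow> (\<forall>j\<in>{1..n}.
     mono_on {l j..u j} (g j) \<and>
     strict_antimono_on {l j..u j} (\<lambda>x. - d\<phi> j x / dg j x))"

end

theory Submission
  imports Defs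
begin

(* At a minimizer x of phi_j + mu g_j on [l_j, u_j] the one-sided first-order conditions
  compare mu with the ratio mu_j(x) = - phi_j'(x) / g_j'(x): they bound mu on one side when
  x > l_j and on the other when x < u_j. As mu_j is strictly monotone, they pin x_j(mu) down
  and make it monotone in mu (nondecreasing in Case 1, nonincreasing in Case 2); since g_j has
  the opposite monotonicity, g_j(x_j(mu)) is nonincreasing in mu in both cases. Because
  mu* > 0, the constraint is active at x*, which is x(mu) for mu = mu*. Hence a slack
  constraint at mu^k forces mu* < mu^k and a violated one forces mu^k < mu*, and monotonicity
  of x_j transports the bound attained at mu^k to mu*. *)

lemma DERIV_neg_imp_less_right:
  fixes f :: "real \<Rightarrow> real"
  assumes "DERIV f x :> f'" "f' < 0" "x < u"
  shows "\<exists>y\<in>{x<..u}. f y < f x"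
proof -
  obtain d where d: "d > 0" "\<And>h. 0 < h \<Longrightarrow> h < d \<Longrightarrow> f (x + h) < f x"
    using DERIV_neg_dec_right[OF assms(1,2)] by blast
  define h where "h = min (d / 2) (u - x)"
  have "0 < h" "h < d" "x + h \<le> u" using d(1) \<open>x < u\<close> by (auto simp: h_def)
  then show ?thesis using d(2) by (intro bexI[of _ "x + h"]) auto
qed

lemma DERIV_pos_imp_less_left:
  fixes f :: "real \<Rightarrow> real"
  assumes "DERIV f x :> f'" "0 < f'" "l < x"
  shows "\<exists>y\<in>{l..<x}. f y < f x"
proof -
  obtain d where d: "d > 0" "\<And>h. 0 < h \<Longrightarrow> h < d \<Longrightarrow> f (x - h) < f x"
    using DERIV_pos_inc_left[OF assms(1,2)] by blast
  define h where "h = min (d / 2) (x - l)"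
  have "0 < h" "h < d" "l \<le> x - h" using d(1) \<open>l < x\<close> by (auto simp: h_def)
  then show ?thesis using d(2) by (intro bexI[of _ "x - h"]) auto
qed

lemma DERIV_at_interval_minimum:
  fixes f :: "real \<Rightarrow> real"
  assumes "DERIV f x :> f'" "x \<in> {l..u}" "\<And>y. y \<in> {l..u} \<Longrightarrow> f x \<le> f y"
  shows "l < x \<Longrightarrow> f' \<le> 0" and "x < u \<Longrightarrow> 0 \<le> f'"
proof -
  show "f' \<le> 0" if lx: "l < x"
  proof (rule ccontr)
    assume "\<not> f' \<le> 0"
    then obtain y where "y \<in> {l..<x}" "f y < f x"
      using DERIV_pos_imp_less_left[OF assms(1) _ lx] by auto
    with assms(2) assms(3)[of y] show False by auto
  qed
  show "0 \<le> f'" if xu: "x < u"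
  proof (rule ccontr)
    assume "\<not> 0 \<le> f'"
    then obtain y where "y \<in> {x<..u}" "f y < f x"
      using DERIV_neg_imp_less_right[OF assms(1) _ xu] by auto
    with assms(2) assms(3)[of y] show False by auto
  qed
qed

lemma mono_on_imp_DERIV_nonneg:
  fixes q :: "real \<Rightarrow> real"
  assumes der: "DERIV q x :> q'" and mono: "mono_on {l..u} q"
    and x: "x \<in> {l..u}" and "l < u"
  shows "0 \<le> q'"
proof (cases "x < u")
  case True
  have "q x \<le> q y" if "y \<in> {x..u}" for y
    using that x by (intro monotone_onD[OF mono]) auto
  then show ?thesis using DERIV_at_interval_minimum(2)[OF der, of x u] True by simp
next
  case False
  then have "l < x" using x \<open>l < u\<close> by auto
  have "- q x \<le> - q y" if "y \<in> {l..x}" for y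
    using that x by (auto intro: monotone_onD[OF mono])
  then show ?thesis using DERIV_at_interval_minimum(1)[OF DERIV_minus[OF der], of l x] \<open>l < x\<close> x
    by simp
qed

lemma antimono_on_imp_DERIV_nonpos:
  fixes q :: "real \<Rightarrow> real"
  assumes der: "DERIV q x :> q'" and anti: "antimono_on {l..u} q"
    and x: "x \<in> {l..u}" and "l < u"
  shows "q' \<le> 0"
proof -
  have "mono_on {l..u} (\<lambda>x. - q x)"
    using anti by (auto simp: monotone_on_def)
  from mono_on_imp_DERIV_nonneg[OF DERIV_minus[OF der] this x \<open>l < u\<close>] show ?thesis by simp
qed

definition kkt_point :: "(real \<Rightarrow> real) \<Rightarrow> (real \<Rightarrow> real) \<Rightarrow> real \<Rightarrow> real \<Rightarrow> real \<Rightarrow> real \<Rightarrow> bool"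
  where "kkt_point dp dq l u \<mu> x \<longleftrightarrow>
    x \<in> {l..u} \<and> (l < x \<longrightarrow> dp x + \<mu> * dq x \<le> 0) \<and> (x < u \<longrightarrow> 0 \<le> dp x + \<mu> * dq x)"

lemma kkt_point_if_interval_minimum:
  assumes "DERIV p x :> dp x" "DERIV q x :> dq x" "x \<in> {l..u}"
    and "\<And>y. y \<in> {l..u} \<Longrightarrow> p x + \<mu> * q x \<le> p y + \<mu> * q y"
  shows "kkt_point dp dq l u \<mu> x"
proof -
  have "DERIV (\<lambda>x. p x + \<mu> * q x) x :> dp x + \<mu> * dq x"
    using assms(1,2) by (auto intro!: derivative_eq_intros)
  from DERIV_at_interval_minimum[OF this assms(3,4)] show ?thesis
    using assms(3) by (simp add: kkt_point_def)
qed

lemma strict_mono_on_threshold_le: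
  fixes r :: "real \<Rightarrow> real"
  assumes "strict_mono_on {l..u} r" "x \<in> {l..u}" "y \<in> {l..u}"
    and "l < x \<Longrightarrow> r x \<le> \<mu>" "y < u \<Longrightarrow> \<nu> \<le> r y" "\<mu> \<le> \<nu>"
  shows "x \<le> y"
proof (rule ccontr)
  assume "\<not> x \<le> y"
  then have "y < x" by simp
  then have "r y < r x" using strict_mono_onD[OF assms(1)] assms(2,3) by blast
  moreover have "l < x" "y < u" using \<open>y < x\<close> assms(2,3) by auto
  ultimately show False using assms(4-6) by fastforce
qed

lemma kkt_point_ratio_if_deriv_neg:
  assumes kkt: "kkt_point dp dq l u \<mu> x" and neg: "dq x < 0"
  shows "l < x \<Longrightarrow> - dp x / dq x \<le> \<mu>" and "x < u \<Longrightarrow> \<mu> \<le> - dp x / dq x"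
proof -
  show "- dp x / dq x \<le> \<mu>" if "l < x"
    using kkt that by (subst neg_divide_le_eq[OF neg]) (auto simp: kkt_point_def)
  show "\<mu> \<le> - dp x / dq x" if "x < u"
    using kkt that by (subst neg_le_divide_eq[OF neg]) (auto simp: kkt_point_def)
qed

lemma kkt_point_ratio_if_deriv_pos:
  assumes kkt: "kkt_point dp dq l u \<mu> x" and pos: "dq x > 0"
  shows "l < x \<Longrightarrow> \<mu> \<le> - dp x / dq x" and "x < u \<Longrightarrow> - dp x / dq x \<le> \<mu>"
proof -
  show "\<mu> \<le> - dp x / dq x" if "l < x"
    using kkt that by (subst pos_le_divide_eq[OF pos]) (auto simp: kkt_point_def)
  show "- dp x / dq x \<le> \<mu>" if "x < u"
    using kkt that by (subst pos_divide_le_eq[OF pos]) (auto simp: kkt_point_def)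
qed

lemma kkt_point_mono:
  assumes neg: "\<And>x. x \<in> {l..u} \<Longrightarrow> dq x < 0"
    and ratio: "strict_mono_on {l..u} (\<lambda>x. - dp x / dq x)"
    and x: "kkt_point dp dq l u \<mu> x" and y: "kkt_point dp dq l u \<nu> y" and "\<mu> \<le> \<nu>"
  shows "x \<le> y"
proof (rule strict_mono_on_threshold_le[OF ratio _ _ _ _ \<open>\<mu> \<le> \<nu>\<close>])
  show xi: "x \<in> {l..u}" and yi: "y \<in> {l..u}" using x y by (auto simp: kkt_point_def)
  show "- dp x / dq x \<le> \<mu>" if "l < x"
    using kkt_point_ratio_if_deriv_neg(1)[OF x neg[OF xi] that] .
  show "\<nu> \<le> - dp y / dq y" if "y < u"
    using kkt_point_ratio_if_deriv_neg(2)[OF y neg[OF yi] that] .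
qed

lemma kkt_point_antimono:
  assumes pos: "\<And>x. x \<in> {l..u} \<Longrightarrow> dq x > 0"
    and ratio: "strict_antimono_on {l..u} (\<lambda>x. - dp x / dq x)"
    and x: "kkt_point dp dq l u \<mu> x" and y: "kkt_point dp dq l u \<nu> y" and "\<mu> \<le> \<nu>"
  shows "y \<le> x"
proof (rule strict_mono_on_threshold_le[where r = "\<lambda>x. dp x / dq x" and \<mu> = "- \<nu>" and \<nu> = "- \<mu>"])
  show "strict_mono_on {l..u} (\<lambda>x. dp x / dq x)"
    using ratio by (auto simp: monotone_on_def)
  show xi: "x \<in> {l..u}" and yi: "y \<in> {l..u}" using x y by (auto simp: kkt_point_def)
  show "dp y / dq y \<le> - \<nu>" if "l < y"
    using kkt_point_ratio_if_deriv_pos(1)[OF y pos[OF yi] that] by simp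
  show "- \<mu> \<le> dp x / dq x" if "x < u"
    using kkt_point_ratio_if_deriv_pos(2)[OF x pos[OF xi] that] by simp
  show "- \<nu> \<le> - \<mu>" using \<open>\<mu> \<le> \<nu>\<close> by simp
qed

lemma kkt_point_the_interval_minimizer:
  fixes p q :: "real \<Rightarrow> real"
  assumes p: "\<And>x. DERIV p x :> dp x" and q: "\<And>x. DERIV q x :> dq x" and "l \<le> u"
    and unique: "\<And>x y. kkt_point dp dq l u \<mu> x \<Longrightarrow> kkt_point dp dq l u \<mu> y \<Longrightarrow> x = y"
  shows "kkt_point dp dq l u \<mu> (THE x. x \<in> {l..u} \<and> (\<forall>y\<in>{l..u}. p x + \<mu> * q x \<le> p y + \<mu> * q y))"
proof -
  let ?h = "\<lambda>x. p x + \<mu> * q x"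
  let ?min = "\<lambda>z. z \<in> {l..u} \<and> (\<forall>y\<in>{l..u}. ?h z \<le> ?h y)"
  have kkt: "kkt_point dp dq l u \<mu> z" if "?min z" for z
    using that by (intro kkt_point_if_interval_minimum[OF p q]) auto
  have "continuous_on {l..u} ?h"
    using p q by (intro continuous_at_imp_continuous_on ballI DERIV_isCont)
      (auto intro!: derivative_eq_intros)
  then obtain m where m: "?min m"
    using continuous_attains_inf[of "{l..u}" ?h] \<open>l \<le> u\<close> by auto
  have "?min z \<Longrightarrow> z = m" for z using unique[OF kkt kkt[OF m]] .
  then have "(THE z. ?min z) = m" using m by (intro the_equality)
  with kkt[OF m] show ?thesis by simp
qed

lemma kkt_point_if_opt_lagrange:
  assumes "opt_lagrange n d\<phi> g dg l u b xs \<mu>s" "j \<in> {1..n}"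
  shows "kkt_point (d\<phi> j) (dg j) (l j) (u j) \<mu>s (xs j)"
proof -
  have "xs j \<in> {l j..u j}"
    and "d\<phi> j (xs j) > - \<mu>s * dg j (xs j) \<Longrightarrow> xs j = l j"
    and "d\<phi> j (xs j) < - \<mu>s * dg j (xs j) \<Longrightarrow> xs j = u j"
    using assms unfolding opt_lagrange_def by auto
  then show ?thesis unfolding kkt_point_def by fastforce
qed

(* Strict monotonicity of - phi_j' / g_j' alone makes the minimizer of phi_j + mu g_j unique. *)

locale separable_resource_problem =
  fixes n :: nat and \<phi> d\<phi> g dg :: "nat \<Rightarrow> real \<Rightarrow> real" and l u :: "nat \<Rightarrow> real"
  assumes phi_deriv: "\<And>j x. j \<in> {1..n} \<Longrightarrow> DERIV (\<phi> j) x :> d\<phi> j x"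
    and g_deriv: "\<And>j x. j \<in> {1..n} \<Longrightarrow> DERIV (g j) x :> dg j x"
    and lu: "\<And>j. j \<in> {1..n} \<Longrightarrow> l j < u j"
    and dg_nz: "\<And>j x. j \<in> {1..n} \<Longrightarrow> x \<in> {l j..u j} \<Longrightarrow> dg j x \<noteq> 0"
    and monotone_case: "case1 n d\<phi> g dg l u \<or> case2 n d\<phi> g dg l u"
begin

abbreviation kkt :: "nat \<Rightarrow> real \<Rightarrow> real \<Rightarrow> bool"
  where "kkt j \<equiv> kkt_point (d\<phi> j) (dg j) (l j) (u j)"

abbreviation x_at :: "real \<Rightarrow> nat \<Rightarrow> real"
  where "x_at \<mu> j \<equiv> xmu \<phi> g l u \<mu> j"

lemma kkt_mono_if_case1:
  assumes "case1 n d\<phi> g dg l u" "j \<in> {1..n}" "kkt j \<mu> y" "kkt j \<nu> z" "\<mu> \<le> \<nu>"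
  shows "y \<le> z"
proof (rule kkt_point_mono[OF _ _ assms(3-5)])
  show "strict_mono_on {l j..u j} (\<lambda>x. - d\<phi> j x / dg j x)"
    using assms(1,2) by (simp add: case1_def)
  show "dg j x < 0" if "x \<in> {l j..u j}" for x
    using antimono_on_imp_DERIV_nonpos[OF g_deriv _ that lu] dg_nz that assms(1,2)
    by (force simp: case1_def)
qed

lemma kkt_antimono_if_case2:
  assumes "case2 n d\<phi> g dg l u" "j \<in> {1..n}" "kkt j \<mu> y" "kkt j \<nu> z" "\<mu> \<le> \<nu>"
  shows "z \<le> y"
proof (rule kkt_point_antimono[OF _ _ assms(3-5)])
  show "strict_antimono_on {l j..u j} (\<lambda>x. - d\<phi> j x / dg j x)"
    using assms(1,2) by (simp add: case2_def)
  show "dg j x > 0" if "x \<in> {l j..u j}" for x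
    using mono_on_imp_DERIV_nonneg[OF g_deriv _ that lu] dg_nz that assms(1,2)
    by (force simp: case2_def)
qed

lemma kkt_unique: "j \<in> {1..n} \<Longrightarrow> kkt j \<mu> y \<Longrightarrow> kkt j \<mu> z \<Longrightarrow> y = z"
  using monotone_case kkt_mono_if_case1 kkt_antimono_if_case2 by (meson order.antisym order.refl)

lemma kkt_x_at: "j \<in> {1..n} \<Longrightarrow> kkt j \<mu> (x_at \<mu> j)"
  unfolding xmu_def
  by (rule kkt_point_the_interval_minimizer[OF phi_deriv g_deriv less_imp_le[OF lu] kkt_unique])

lemma x_at_eqI: "j \<in> {1..n} \<Longrightarrow> kkt j \<mu> y \<Longrightarrow> x_at \<mu> j = y"
  using kkt_unique kkt_x_at by blast

lemma x_at_bounds: "j \<in> {1..n} \<Longrightarrow> x_at \<mu> j \<in> {l j..u j}"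
  using kkt_x_at by (simp add: kkt_point_def)

lemma x_at_mono_if_case1:
  assumes "case1 n d\<phi> g dg l u" "j \<in> {1..n}" "\<mu> \<le> \<nu>"
  shows "x_at \<mu> j \<le> x_at \<nu> j"
  using kkt_mono_if_case1[OF assms(1,2) kkt_x_at[OF assms(2)] kkt_x_at[OF assms(2)] assms(3)] .

lemma x_at_antimono_if_case2:
  assumes "case2 n d\<phi> g dg l u" "j \<in> {1..n}" "\<mu> \<le> \<nu>"
  shows "x_at \<nu> j \<le> x_at \<mu> j"
  using kkt_antimono_if_case2[OF assms(1,2) kkt_x_at[OF assms(2)] kkt_x_at[OF assms(2)] assms(3)] .

lemma resource_antimono:
  assumes j: "j \<in> {1..n}" and "\<mu> \<le> \<nu>"
  shows "g j (x_at \<nu> j) \<le> g j (x_at \<mu> j)"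
  using monotone_case
proof
  assume c: "case1 n d\<phi> g dg l u"
  then have "antimono_on {l j..u j} (g j)" using j by (simp add: case1_def)
  moreover have "x_at \<mu> j \<le> x_at \<nu> j" using x_at_mono_if_case1[OF c j \<open>\<mu> \<le> \<nu>\<close>] .
  ultimately show ?thesis by (rule monotone_onD[OF _ x_at_bounds[OF j] x_at_bounds[OF j]])
next
  assume c: "case2 n d\<phi> g dg l u"
  then have "mono_on {l j..u j} (g j)" using j by (simp add: case2_def)
  moreover have "x_at \<nu> j \<le> x_at \<mu> j" using x_at_antimono_if_case2[OF c j \<open>\<mu> \<le> \<nu>\<close>] .
  ultimately show ?thesis by (rule monotone_onD[OF _ x_at_bounds[OF j] x_at_bounds[OF j]])
qed

lemma multiplier_less_if_resource_less:
  assumes "(\<Sum>j\<in>{1..n}. g j (x_at \<mu> j)) < (\<Sum>j\<in>{1..n}. g j (x_at \<nu> j))"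
  shows "\<nu> < \<mu>"
proof (rule ccontr)
  assume "\<not> \<nu> < \<mu>"
  then have "(\<Sum>j\<in>{1..n}. g j (x_at \<nu> j)) \<le> (\<Sum>j\<in>{1..n}. g j (x_at \<mu> j))"
    by (intro sum_mono resource_antimono) auto
  with assms show False by simp
qed


lemma Lset_antimono_if_case1:
  assumes "case1 n d\<phi> g dg l u" "\<mu> \<le> \<nu>"
  shows "Lset n \<phi> g l u \<nu> \<subseteq> Lset n \<phi> g l u \<mu>"
proof
  fix j assume "j \<in> Lset n \<phi> g l u \<nu>"
  then have j: "j \<in> {1..n}" and "x_at \<nu> j = l j" by (auto simp: Lset_def)
  moreover have "x_at \<mu> j \<le> x_at \<nu> j" using x_at_mono_if_case1[OF assms(1) j assms(2)] .
  ultimately show "j \<in> Lset n \<phi> g l u \<mu>"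
    using x_at_bounds[OF j, of \<mu>] by (simp add: Lset_def)
qed

lemma Uset_mono_if_case1:
  assumes "case1 n d\<phi> g dg l u" "\<mu> \<le> \<nu>"
  shows "Uset n \<phi> g l u \<mu> \<subseteq> Uset n \<phi> g l u \<nu>"
proof
  fix j assume "j \<in> Uset n \<phi> g l u \<mu>"
  then have j: "j \<in> {1..n}" and "x_at \<mu> j = u j" by (auto simp: Uset_def)
  moreover have "x_at \<mu> j \<le> x_at \<nu> j" using x_at_mono_if_case1[OF assms(1) j assms(2)] .
  ultimately show "j \<in> Uset n \<phi> g l u \<nu>"
    using x_at_bounds[OF j, of \<nu>] by (simp add: Uset_def)
qed

lemma Uset_antimono_if_case2:
  assumes "case2 n d\<phi> g dg l u" "\<mu> \<le> \<nu>"
  shows "Uset n \<phi> g l u \<nu> \<subseteq> Uset n \<phi> g l u \<mu>"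
proof
  fix j assume "j \<in> Uset n \<phi> g l u \<nu>"
  then have j: "j \<in> {1..n}" and "x_at \<nu> j = u j" by (auto simp: Uset_def)
  moreover have "x_at \<nu> j \<le> x_at \<mu> j" using x_at_antimono_if_case2[OF assms(1) j assms(2)] .
  ultimately show "j \<in> Uset n \<phi> g l u \<mu>"
    using x_at_bounds[OF j, of \<mu>] by (simp add: Uset_def)
qed

lemma Lset_mono_if_case2:
  assumes "case2 n d\<phi> g dg l u" "\<mu> \<le> \<nu>"
  shows "Lset n \<phi> g l u \<mu> \<subseteq> Lset n \<phi> g l u \<nu>"
proof
  fix j assume "j \<in> Lset n \<phi> g l u \<mu>"
  then have j: "j \<in> {1..n}" and "x_at \<mu> j = l j" by (auto simp: Lset_def)
  moreover have "x_at \<nu> j \<le> x_at \<mu> j" using x_at_antimono_if_case2[OF assms(1) j assms(2)] .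
  ultimately show "j \<in> Lset n \<phi> g l u \<nu>"
    using x_at_bounds[OF j, of \<nu>] by (simp add: Lset_def)
qed

end

theorem proposition1:
  fixes n :: nat and \<phi> d\<phi> g dg :: "nat \<Rightarrow> real \<Rightarrow> real"
    and l u :: "nat \<Rightarrow> real" and b :: real
    and xs :: "nat \<Rightarrow> real" and \<mu>s \<mu>k :: real
  assumes phi_deriv: "\<And>j x. j \<in> {1..n} \<Longrightarrow> (\<phi> j has_real_derivative d\<phi> j x) (at x)"
    and g_deriv: "\<And>j x. j \<in> {1..n} \<Longrightarrow> (g j has_real_derivative dg j x) (at x)"
    and dphi_cont: "\<And>j. j \<in> {1..n} \<Longrightarrow> continuous_on UNIV (d\<phi> j)"
    and dg_cont: "\<And>j. j \<in> {1..n} \<Longrightarrow> continuous_on UNIV (dg j)"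
    and phi_sconv: "\<And>j. j \<in> {1..n} \<Longrightarrow> strict_convex_on UNIV (\<phi> j)"
    and g_conv: "\<And>j. j \<in> {1..n} \<Longrightarrow> convex_on UNIV (g j)"
    and lu: "\<And>j. j \<in> {1..n} \<Longrightarrow> l j < u j"
    and dg_nz: "\<And>j x. j \<in> {1..n} \<Longrightarrow> x \<in> {l j..u j} \<Longrightarrow> dg j x \<noteq> 0"
    and opt: "opt_lagrange n d\<phi> g dg l u b xs \<mu>s"
    and mus_pos: "\<mu>s > 0"
    and cases: "case1 n d\<phi> g dg l u \<or> case2 n d\<phi> g dg l u"
    and muk: "\<mu>k \<ge> 0"
  shows
   "(case1 n d\<phi> g dg l u \<and> (\<Sum>j\<in>{1..n}. g j (xmu \<phi> g l u \<mu>k j)) < b \<longrightarrow>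
       (\<forall>j\<in>Lset n \<phi> g l u \<mu>k. xs j = l j)) \<and>
    (case1 n d\<phi> g dg l u \<and> (\<Sum>j\<in>{1..n}. g j (xmu \<phi> g l u \<mu>k j)) > b \<longrightarrow>
       (\<forall>j\<in>Uset n \<phi> g l u \<mu>k. xs j = u j)) \<and>
    (case2 n d\<phi> g dg l u \<and> (\<Sum>j\<in>{1..n}. g j (xmu \<phi> g l u \<mu>k j)) < b \<longrightarrow>
       (\<forall>j\<in>Uset n \<phi> g l u \<mu>k. xs j = u j)) \<and>
    (case2 n d\<phi> g dg l u \<and> (\<Sum>j\<in>{1..n}. g j (xmu \<phi> g l u \<mu>k j)) > b \<longrightarrow>
       (\<forall>j\<in>Lset n \<phi> g l u \<mu>k. xs j = l j))"
proof -
  interpret separable_resource_problem n \<phi> d\<phi> g dg l u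
    using phi_deriv g_deriv lu dg_nz cases by unfold_locales
  have xs: "xs j = x_at \<mu>s j" if "j \<in> {1..n}" for j
    using x_at_eqI[OF that kkt_point_if_opt_lagrange[OF opt that]] by simp
  have budget: "(\<Sum>j\<in>{1..n}. g j (x_at \<mu>s j)) = b"
    using opt mus_pos xs by (simp add: opt_lagrange_def)
  have below: "\<mu>s \<le> \<mu>k" if "(\<Sum>j\<in>{1..n}. g j (x_at \<mu>k j)) < b"
    using multiplier_less_if_resource_less[of \<mu>k \<mu>s] that budget by simp
  have above: "\<mu>k \<le> \<mu>s" if "(\<Sum>j\<in>{1..n}. g j (x_at \<mu>k j)) > b"
    using multiplier_less_if_resource_less[of \<mu>s \<mu>k] that budget by simp
  have xs_l: "xs j = l j" if "j \<in> Lset n \<phi> g l u \<mu>s" for j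
    using that xs by (simp add: Lset_def)
  have xs_u: "xs j = u j" if "j \<in> Uset n \<phi> g l u \<mu>s" for j
    using that xs by (simp add: Uset_def)
  show ?thesis
  proof (intro conjI impI ballI)
    show "xs j = l j" if "case1 n d\<phi> g dg l u \<and> (\<Sum>j\<in>{1..n}. g j (x_at \<mu>k j)) < b"
      and "j \<in> Lset n \<phi> g l u \<mu>k" for j
      using that Lset_antimono_if_case1[OF _ below] xs_l by blast
    show "xs j = u j" if "case1 n d\<phi> g dg l u \<and> (\<Sum>j\<in>{1..n}. g j (x_at \<mu>k j)) > b"
      and "j \<in> Uset n \<phi> g l u \<mu>k" for j
      using that Uset_mono_if_case1[OF _ above] xs_u by blast
    show "xs j = u j" if "case2 n d\<phi> g dg l u \<and> (\<Sum>j\<in>{1..n}. g j (x_at \<mu>k j)) < b"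
      and "j \<in> Uset n \<phi> g l u \<mu>k" for j
      using that Uset_antimono_if_case2[OF _ below] xs_u by blast
    show "xs j = l j" if "case2 n d\<phi> g dg l u \<and> (\<Sum>j\<in>{1..n}. g j (x_at \<mu>k j)) > b"
      and "j \<in> Lset n \<phi> g l u \<mu>k" for j
      using that Lset_mono_if_case2[OF _ above] xs_l by blast
  qed
qed

end
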